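(* Let $p$ be any prime, $G=SL(2,\mathbb{Z}_p)$, $T=\{F\in SL(2,\mathbb{Z}_p):\mathrm{Tr}(F)\neq 2\pmod p\}$ and $\Gamma=\Gamma(G,T)$. Then assigning to each $F=\begin{pmatrix}\alpha&\beta\\ \gamma&\delta\end{pmatrix}$ the color $(\alpha,\beta)$ is a proper vertex coloring of $\Gamma$ with $p^2-1$ colors, so that $p(p-1)\leq\chi(\Gamma)\leq p^2-1$ and $\omega(\Gamma)\leq p^2-1$.
   Context: The Cayley graph $\Gamma(G,T)$ has vertex set $G$ and an edge between $g_1,g_2$ iff $g_1^{-1}g_2\in T$. A proper coloring assigns colors to vertices so that adjacent vertices receive different colors; $\chi(\Gamma)$ is the minimum number of colors in a proper coloring, and $\omega(\Gamma)$ is the largest size of a set of pairwise adjacent vertices. *)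

theory Defs
  imports Main "HOL-Computational_Algebra.Primes"
begin

text \<open>2x2 matrices over Z_p represented as tuples (alpha, beta, gamma, delta) of
 integer representatives in {0..<p}, i.e. the matrix [[alpha, beta],[gamma, delta]].\<close>

type_synonym mat2 = "int \<times> int \<times> int \<times> int"

definition SL2 :: "nat \<Rightarrow> mat2 set" where
  "SL2 p = {(a,b,c,d). a \<in> {0..<int p} \<and> b \<in> {0..<int p} \<and> c \<in> {0..<int p} \<and> d \<in> {0..<int p}
              \<and> (a*d - b*c) mod int p = 1 mod int p}"

fun mmul :: "nat \<Rightarrow> mat2 \<Rightarrow> mat2 \<Rightarrow> mat2" where
  "mmul p (a,b,c,d) (e,f,g,h) =
     ((a*e + b*g) mod int p, (a*f + b*h) mod int p, (c*e + d*g) mod int p, (c*f + d*h) mod int p)"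

text \<open>Inverse in SL(2,Z_p): the adjugate matrix (determinant is 1).\<close>
fun minv :: "nat \<Rightarrow> mat2 \<Rightarrow> mat2" where
  "minv p (a,b,c,d) = (d mod int p, (- b) mod int p, (- c) mod int p, a mod int p)"

fun mtrace :: "mat2 \<Rightarrow> int" where
  "mtrace (a,b,c,d) = a + d"

definition Tset :: "nat \<Rightarrow> mat2 set" where
  "Tset p = {F \<in> SL2 p. mtrace F mod int p \<noteq> 2 mod int p}"

definition cayley_adj :: "nat \<Rightarrow> mat2 \<Rightarrow> mat2 \<Rightarrow> bool" where
  "cayley_adj p g1 g2 \<longleftrightarrow> mmul p (minv p g1) g2 \<in> Tset p"

definition proper_coloring :: "'v set \<Rightarrow> ('v \<Rightarrow> 'v \<Rightarrow> bool) \<Rightarrow> ('v \<Rightarrow> 'c) \<Rightarrow> bool" where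
  "proper_coloring V E col \<longleftrightarrow> (\<forall>u\<in>V. \<forall>v\<in>V. E u v \<longrightarrow> col u \<noteq> col v)"

definition chromatic_number :: "'v set \<Rightarrow> ('v \<Rightarrow> 'v \<Rightarrow> bool) \<Rightarrow> nat" where
  "chromatic_number V E = (LEAST k. \<exists>col :: 'v \<Rightarrow> nat. (\<forall>v\<in>V. col v < k) \<and> proper_coloring V E col)"

definition is_clique :: "'v set \<Rightarrow> ('v \<Rightarrow> 'v \<Rightarrow> bool) \<Rightarrow> 'v set \<Rightarrow> bool" where
  "is_clique V E K \<longleftrightarrow> K \<subseteq> V \<and> (\<forall>u\<in>K. \<forall>v\<in>K. u \<noteq> v \<longrightarrow> E u v)"

definition clique_number :: "'v set \<Rightarrow> ('v \<Rightarrow> 'v \<Rightarrow> bool) \<Rightarrow> nat" where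
  "clique_number V E = Max {card K | K. is_clique V E K}"

end

theory Submission
  imports Defs "HOL-Number_Theory.Cong"
begin

text \<open>
  Write \<open>B(X, Y) = tr(adj X \<cdot> Y)\<close> for the polar form of the determinant, so that
  \<open>tr(X\<^sup>-\<^sup>1 Y) = B(X, Y)\<close> on \<open>SL(2,\<int>\<^sub>p)\<close>: two vertices are non-adjacent exactly when
  \<open>B(X, Y) = 2\<close>. Two matrices with the same first row \<open>r\<close> satisfy
  \<open>B(X, Y) = det X + det Y = 2\<close> (expand along \<open>r\<close>), which makes the first-row coloring
  proper; it uses the \<open>p\<^sup>2 - 1\<close> nonzero rows, bounding \<open>\<chi>\<close> and \<open>\<omega>\<close>.

  For the lower bound, an independent set translated by \<open>g\<^sup>-\<^sup>1\<close> (\<open>g\<close> one of its elements) is a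
  set of unipotent matrices \<open>I + N\<close> with \<open>B \<equiv> 2\<close> pairwise, i.e. the nilpotent parts \<open>N\<close> span a
  totally isotropic subspace for the determinant on trace-zero matrices, which is a line.
  Hence independent sets have at most \<open>p\<close> elements, and \<open>|SL(2,\<int>\<^sub>p)| \<ge> (p-1)p\<^sup>2\<close> vertices
  need at least \<open>p(p-1)\<close> colors.
\<close>

section \<open>Colorings, cliques and independent sets\<close>

definition independent_set :: "'v set \<Rightarrow> ('v \<Rightarrow> 'v \<Rightarrow> bool) \<Rightarrow> 'v set \<Rightarrow> bool" where
  "independent_set V E S \<longleftrightarrow> S \<subseteq> V \<and> (\<forall>u\<in>S. \<forall>v\<in>S. \<not> E u v)"

lemma ex_proper_coloring_less_card_image:
  fixes V :: "'v set"
  assumes "finite (col ` V)" and "proper_coloring V E col"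
  shows "\<exists>c :: 'v \<Rightarrow> nat. (\<forall>v\<in>V. c v < card (col ` V)) \<and> proper_coloring V E c"
proof -
  obtain h where h: "bij_betw h (col ` V) {0..<card (col ` V)}"
    using ex_bij_betw_finite_nat[OF assms(1)] by blast
  have "proper_coloring V E (h \<circ> col)"
    using assms(2) bij_betw_imp_inj_on[OF h]
    unfolding proper_coloring_def inj_on_def by auto
  moreover have "\<forall>v\<in>V. (h \<circ> col) v < card (col ` V)"
    using bij_betw_apply[OF h] by auto
  ultimately show ?thesis by blast
qed

lemma chromatic_number_le_card_image:
  assumes "finite (col ` V)" and "proper_coloring V E col"
  shows "chromatic_number V E \<le> card (col ` V)"
  unfolding chromatic_number_def
  by (rule Least_le) (rule ex_proper_coloring_less_card_image[OF assms])

lemma card_le_chromatic_number_mult: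
  fixes V :: "'v set"
  assumes "finite (col ` V)" and "proper_coloring V E col"
    and independent_le: "\<And>S. independent_set V E S \<Longrightarrow> card S \<le> m"
  shows "card V \<le> chromatic_number V E * m"
proof -
  let ?k = "chromatic_number V E"
  have "\<exists>k. \<exists>c :: 'v \<Rightarrow> nat. (\<forall>v\<in>V. c v < k) \<and> proper_coloring V E c"
    using ex_proper_coloring_less_card_image[OF assms(1,2)] by blast
  hence "\<exists>c :: 'v \<Rightarrow> nat. (\<forall>v\<in>V. c v < ?k) \<and> proper_coloring V E c"
    unfolding chromatic_number_def by (rule LeastI_ex)
  then obtain c :: "'v \<Rightarrow> nat" where c: "\<forall>v\<in>V. c v < ?k" and proper: "proper_coloring V E c"
    by blast
  define color_class where "color_class i = {v \<in> V. c v = i}" for i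
  have "independent_set V E (color_class i)" for i
    unfolding independent_set_def color_class_def
    using proper[unfolded proper_coloring_def] by (simp, metis)
  hence class_le: "card (color_class i) \<le> m" for i
    by (rule independent_le)
  have "V = (\<Union>i<?k. color_class i)"
    using c unfolding color_class_def by auto
  hence "card V \<le> (\<Sum>i<?k. card (color_class i))"
    using card_UN_le[of "{..<?k}" color_class] by simp
  also have "\<dots> \<le> ?k * m"
    using sum_mono[of "{..<?k}" "\<lambda>i. card (color_class i)" "\<lambda>_. m"] class_le by simp
  finally show ?thesis .
qed

lemma clique_number_le_card_image:
  assumes "finite (col ` V)" and "proper_coloring V E col"
  shows "clique_number V E \<le> card (col ` V)"
proof -
  have clique_le: "card K \<le> card (col ` V)" if "is_clique V E K" for K
  proof -
    have "inj_on col K"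
    proof (rule inj_onI, rule ccontr)
      fix u v assume "u \<in> K" "v \<in> K" "col u = col v" "u \<noteq> v"
      thus False
        using that assms(2) unfolding is_clique_def proper_coloring_def by (metis subsetD)
    qed
    hence "card K = card (col ` K)"
      by (simp add: card_image)
    also have "\<dots> \<le> card (col ` V)"
      using that assms(1) unfolding is_clique_def by (intro card_mono) auto
    finally show ?thesis .
  qed
  have "is_clique V E {}"
    by (simp add: is_clique_def)
  moreover have "finite {card K | K. is_clique V E K}"
    using clique_le by (auto intro: finite_subset[of _ "{..card (col ` V)}"])
  ultimately show ?thesis
    unfolding clique_number_def using clique_le by (subst Max_le_iff) auto
qed

section \<open>Arithmetic of \<open>2\<times>2\<close> matrices modulo \<open>p\<close>\<close>

fun det2 :: "mat2 \<Rightarrow> int" where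
  "det2 (a, b, c, d) = a*d - b*c"

text \<open>\<open>det_polar X Y = tr(adj X \<cdot> Y)\<close> is the polarization of the determinant,
  \<open>det (X + Y) = det X + det_polar X Y + det Y\<close>; it is the form \<open>B\<close> above.\<close>

fun det_polar :: "mat2 \<Rightarrow> mat2 \<Rightarrow> int" where
  "det_polar (a, b, c, d) (e, f, g, h) = d*e - b*g - c*f + a*h"

lemma mod_eq_minus_mult_div: "(x::int) mod n = x - n * (x div n)"
  by (simp add: minus_div_mult_eq_mod [symmetric])

text \<open>The congruences below are polynomial identities in the entries, checked after expanding
  every residue \<open>x mod p\<close> as \<open>x - p (x div p)\<close>.\<close>

lemma mtrace_mmul_minv: "mtrace (mmul p (minv p x) y) mod int p = det_polar x y mod int p"
  by (cases x; cases y)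
    (simp, simp only: mod_eq_dvd_iff, simp only: mod_eq_minus_mult_div, simp add: algebra_simps)

lemma det_polar_mmul_left:
  "det_polar (mmul p g x) (mmul p g y) mod int p = (det2 g * det_polar x y) mod int p"
  by (cases g; cases x; cases y)
    (simp, simp only: mod_eq_dvd_iff, simp only: mod_eq_minus_mult_div, simp add: algebra_simps)

lemma det2_mmul: "det2 (mmul p x y) mod int p = (det2 x * det2 y) mod int p"
  by (cases x; cases y)
    (simp, simp only: mod_eq_dvd_iff, simp only: mod_eq_minus_mult_div, simp add: algebra_simps)

lemma det2_minv: "det2 (minv p x) mod int p = det2 x mod int p"
  by (cases x)
    (simp, simp only: mod_eq_dvd_iff, simp only: mod_eq_minus_mult_div, simp add: algebra_simps)

lemma mmul_mmul_minv_eq_smult_det2: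
  "mmul p g (mmul p (minv p g) (e, f, h, k)) =
     ((det2 g * e) mod int p, (det2 g * f) mod int p, (det2 g * h) mod int p, (det2 g * k) mod int p)"
  by (cases g)
    (simp, simp only: mod_eq_dvd_iff, simp only: mod_eq_minus_mult_div, simp add: algebra_simps)

lemma mult_mod_eq_if_mod_eq_1: "(x::int) mod n = 1 mod n \<Longrightarrow> (x * y) mod n = y mod n"
  by (metis mod_mult_left_eq mult_1)

lemma mem_SL2_iff:
  "x \<in> SL2 p \<longleftrightarrow>
     (case x of (a, b, c, d) \<Rightarrow> a \<in> {0..<int p} \<and> b \<in> {0..<int p} \<and> c \<in> {0..<int p} \<and> d \<in> {0..<int p})
     \<and> det2 x mod int p = 1 mod int p"
  by (cases x) (simp add: SL2_def)

lemma finite_SL2: "finite (SL2 p)"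
proof -
  have "SL2 p \<subseteq> {0..<int p} \<times> {0..<int p} \<times> {0..<int p} \<times> {0..<int p}"
    by (auto simp: SL2_def)
  thus ?thesis
    by (rule finite_subset) simp
qed

lemma mmul_in_SL2:
  assumes "p > 0" "x \<in> SL2 p" "y \<in> SL2 p"
  shows "mmul p x y \<in> SL2 p"
proof -
  have "det2 (mmul p x y) mod int p = 1 mod int p"
    using assms det2_mmul[of p x y] by (simp add: mem_SL2_iff mult_mod_eq_if_mod_eq_1)
  thus ?thesis using assms(1) by (cases x; cases y) (simp add: mem_SL2_iff)
qed

lemma minv_in_SL2:
  assumes "p > 0" "x \<in> SL2 p"
  shows "minv p x \<in> SL2 p"
proof -
  have "det2 (minv p x) mod int p = 1 mod int p"
    using assms det2_minv[of p x] by (simp add: mem_SL2_iff)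
  thus ?thesis using assms(1) by (cases x) (simp add: mem_SL2_iff)
qed

lemma mmul_mmul_minv:
  assumes "g \<in> SL2 p" "y \<in> SL2 p"
  shows "mmul p g (mmul p (minv p g) y) = y"
proof -
  obtain a b c d where y: "y = (a, b, c, d)" by (cases y)
  have "det2 g mod int p = 1 mod int p"
    using assms(1) by (simp add: mem_SL2_iff)
  moreover have "a \<in> {0..<int p}" "b \<in> {0..<int p}" "c \<in> {0..<int p}" "d \<in> {0..<int p}"
    using assms(2) unfolding y SL2_def by auto
  ultimately show ?thesis
    unfolding y mmul_mmul_minv_eq_smult_det2 by (simp add: mult_mod_eq_if_mod_eq_1)
qed

section \<open>The Cayley graph\<close>

lemma not_cayley_adj_iff:
  assumes "p > 0" "u \<in> SL2 p" "v \<in> SL2 p"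
  shows "\<not> cayley_adj p u v \<longleftrightarrow> det_polar u v mod int p = 2 mod int p"
  using mmul_in_SL2[OF assms(1) minv_in_SL2[OF assms(1,2)] assms(3)] mtrace_mmul_minv[of p u v]
  by (simp add: cayley_adj_def Tset_def)

definition first_row :: "mat2 \<Rightarrow> int \<times> int" where
  "first_row F = (fst F, fst (snd F))"

lemma proper_coloring_first_row:
  assumes "p > 0"
  shows "proper_coloring (SL2 p) (cayley_adj p) first_row"
  unfolding proper_coloring_def
proof (intro ballI impI notI)
  fix u v assume u: "u \<in> SL2 p" and v: "v \<in> SL2 p" and "cayley_adj p u v"
    and "first_row u = first_row v"
  then obtain a b c d c' d' where uv: "u = (a, b, c, d)" "v = (a, b, c', d')"
    unfolding first_row_def by (cases u; cases v) auto
  have "det_polar u v = det2 u + det2 v"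
    unfolding uv by (simp add: algebra_simps)
  hence "det_polar u v mod int p = 2 mod int p"
    using u v unfolding uv mem_SL2_iff by (metis mod_add_eq one_add_one)
  thus False
    using not_cayley_adj_iff[OF assms u v] \<open>cayley_adj p u v\<close> by blast
qed

lemma prime_int_of_prime: "prime p \<Longrightarrow> prime (int p)"
  by (simp add: prime_nat_int_transfer)

section \<open>Counting rows and matrices\<close>

lemma ex_inverse_mod_prime:
  assumes "prime p" "0 < a" "a < int p"
  shows "\<exists>a'. (a * a') mod int p = 1"
proof -
  have "prime (int p)"
    using prime_int_of_prime[OF assms(1)] .
  moreover have "\<not> int p dvd a"
    using assms(2,3) zdvd_not_zless by blast
  ultimately have "coprime a (int p)"
    using prime_imp_coprime coprime_commute by blast
  then obtain a' where "[a * a' = 1] (mod int p)"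
    using cong_solve_coprime_int by blast
  thus ?thesis
    using prime_gt_1_nat[OF assms(1)] unfolding cong_def by auto
qed

lemma first_row_image_SL2:
  assumes "prime p"
  shows "first_row ` SL2 p = {0..<int p} \<times> {0..<int p} - {(0, 0)}"
proof -
  have one: "1 mod int p = 1"
    using prime_gt_1_nat[OF assms] by simp
  hence "first_row ` SL2 p \<subseteq> {0..<int p} \<times> {0..<int p} - {(0, 0)}"
    by (auto simp: first_row_def SL2_def)
  moreover have "{0..<int p} \<times> {0..<int p} - {(0, 0)} \<subseteq> first_row ` SL2 p"
  proof
    fix r assume r: "r \<in> {0..<int p} \<times> {0..<int p} - {(0, 0)}"
    then obtain a b where ab: "r = (a, b)" and a: "a \<in> {0..<int p}" and b: "b \<in> {0..<int p}"
      and nonzero: "(a, b) \<noteq> (0, 0)"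
      by blast
    show "r \<in> first_row ` SL2 p"
    proof (cases "a = 0")
      case False
      then obtain a' where a': "(a * a') mod int p = 1"
        using ex_inverse_mod_prime[OF assms] a by force
      have "(a * (a' mod int p) - b * 0) mod int p = 1 mod int p"
        using a' one by (simp add: mod_simps)
      hence "(a, b, 0, a' mod int p) \<in> SL2 p"
        using a b prime_gt_0_nat[OF assms] by (simp add: SL2_def)
      thus ?thesis
        using ab by (force simp: first_row_def)
    next
      case True
      with nonzero b obtain b' where b': "(b * b') mod int p = 1"
        using ex_inverse_mod_prime[OF assms] by force
      have "(a * 0 - b * ((- b') mod int p)) mod int p = (b * b') mod int p"
        unfolding True
        by (simp, simp only: mod_eq_dvd_iff, simp only: mod_eq_minus_mult_div, simp add: algebra_simps)
      hence "(a, b, (- b') mod int p, 0) \<in> SL2 p"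
        using a b b' one prime_gt_0_nat[OF assms] by (simp add: SL2_def)
      thus ?thesis
        using ab by (force simp: first_row_def)
    qed
  qed
  ultimately show ?thesis
    by blast
qed

lemma card_first_row_image_SL2:
  assumes "prime p"
  shows "card (first_row ` SL2 p) = p^2 - 1"
  using prime_gt_0_nat[OF assms]
  by (simp add: first_row_image_SL2[OF assms] card_cartesian_product power2_eq_square)

lemma card_SL2_ge:
  assumes "prime p"
  shows "(p - 1) * p * p \<le> card (SL2 p)"
proof -
  have "\<forall>a\<in>{1..<int p}. \<exists>a'. (a * a') mod int p = 1"
    using ex_inverse_mod_prime[OF assms] by auto
  then obtain inv where inv: "\<And>a. a \<in> {1..<int p} \<Longrightarrow> (a * inv a) mod int p = 1"
    by metis
  define A where "A = {1..<int p} \<times> {0..<int p} \<times> {0..<int p}"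
  define complete where "complete x = (case x of (a, b, c) \<Rightarrow> (a, b, c, (inv a * (1 + b*c)) mod int p))" for x
  \<comment> \<open>the entry \<open>d = a\<^sup>-\<^sup>1(1 + bc)\<close> is forced by \<open>ad - bc = 1\<close>\<close>
  have "inj_on complete A"
    unfolding complete_def by (rule inj_onI) auto
  moreover have "complete ` A \<subseteq> SL2 p"
  proof
    fix y assume "y \<in> complete ` A"
    then obtain a b c where abc: "(a, b, c) \<in> A" and y: "y = complete (a, b, c)"
      by (metis imageE prod_cases3)
    define x where "x = inv a * (1 + b*c)"
    have "int p dvd a * inv a - 1"
      using inv[of a] abc prime_gt_1_nat[OF assms] unfolding A_def
      by (simp add: mod_eq_dvd_iff[symmetric])
    moreover have "a * (x mod int p) - b*c - 1
        = (a * inv a - 1) * (1 + b*c) - int p * (a * (x div int p))"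
      unfolding x_def by (simp add: mod_eq_minus_mult_div algebra_simps)
    ultimately have "int p dvd a * (x mod int p) - b*c - 1"
      by (metis dvd_diff dvd_mult2 dvd_triv_left)
    hence "(a * (x mod int p) - b*c) mod int p = 1 mod int p"
      by (simp add: mod_eq_dvd_iff)
    thus "y \<in> SL2 p"
      using abc prime_gt_0_nat[OF assms] unfolding y A_def complete_def SL2_def x_def by auto
  qed
  ultimately have "card A \<le> card (SL2 p)"
    using card_inj_on_le finite_SL2 by blast
  moreover have "card A = (p - 1) * p * p"
    unfolding A_def by (simp add: card_cartesian_product nat_diff_distrib')
  ultimately show ?thesis
    by simp
qed

section \<open>Independent sets have at most \<open>p\<close> elements\<close>

definition unipotent :: "nat \<Rightarrow> mat2 \<Rightarrow> bool" where
  "unipotent p u \<longleftrightarrow> u \<in> SL2 p \<and> mtrace u mod int p = 2 mod int p"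

lemma eq_if_dvd_diff_in_range:
  "(x::int) \<in> {0..<P} \<Longrightarrow> y \<in> {0..<P} \<Longrightarrow> P dvd x - y \<Longrightarrow> x = y"
  by (metis atLeastLessThan_iff mod_eq_dvd_iff mod_pos_pos_trivial)

lemma unipotentD:
  assumes "unipotent p (a, b, c, d)"
  shows unipotent_range: "a \<in> {0..<int p}" "b \<in> {0..<int p}" "c \<in> {0..<int p}" "d \<in> {0..<int p}"
    and unipotent_trace_dvd: "int p dvd a + d - 2"
    and unipotent_nilpotent_dvd: "int p dvd (a - 1)^2 + b*c"
proof -
  show "a \<in> {0..<int p}" "b \<in> {0..<int p}" "c \<in> {0..<int p}" "d \<in> {0..<int p}"
    using assms by (auto simp: unipotent_def SL2_def)
  show trace: "int p dvd a + d - 2"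
    using assms by (simp add: unipotent_def mod_eq_dvd_iff)
  have det: "int p dvd a*d - b*c - 1"
    using assms by (simp add: unipotent_def SL2_def mod_eq_dvd_iff)
  have "(a - 1)^2 + b*c = a * (a + d - 2) - (a*d - b*c - 1)"
    by (simp add: power2_eq_square algebra_simps)
  thus "int p dvd (a - 1)^2 + b*c"
    using trace det by (metis dvd_diff dvd_mult)
qed

lemma unipotent_polar_dvd:
  assumes "unipotent p (a, b, c, d)" "unipotent p (a', b', c', d')"
    and "det_polar (a, b, c, d) (a', b', c', d') mod int p = 2 mod int p"
  shows "int p dvd 2 * (a - 1) * (a' - 1) + b*c' + c*b'"
proof -
  have "int p dvd (d*a' - b*c' - c*b' + a*d') - 2"
    using assms(3) by (simp add: mod_eq_dvd_iff)
  moreover have "2 * (a - 1) * (a' - 1) + b*c' + c*b'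
      = (a + d - 2) * a' + a * (a' + d' - 2) - ((d*a' - b*c' - c*b' + a*d') - 2)"
    by (simp add: algebra_simps)
  ultimately show ?thesis
    using unipotent_trace_dvd[OF assms(1)] unipotent_trace_dvd[OF assms(2)]
    by (metis dvd_diff dvd_add dvd_mult dvd_mult2)
qed

lemma unipotent_upper_triangular:
  assumes "prime p" "unipotent p (a, 0, c, d)"
  shows "a = 1 \<and> d = 1"
proof -
  have "int p dvd (a - 1)^2"
    using unipotent_nilpotent_dvd[OF assms(2)] by simp
  hence "int p dvd a - 1"
    using prime_dvd_power[OF prime_int_of_prime[OF assms(1)]] by blast
  moreover have "1 \<in> {0..<int p}"
    using prime_gt_1_nat[OF assms(1)] by simp
  ultimately have a: "a = 1"
    using eq_if_dvd_diff_in_range[OF unipotent_range(1)[OF assms(2)]] by blast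
  hence "int p dvd d - 1"
    using unipotent_trace_dvd[OF assms(2)] by simp
  hence "d = 1"
    using eq_if_dvd_diff_in_range[OF unipotent_range(4)[OF assms(2)] \<open>1 \<in> {0..<int p}\<close>] by blast
  with a show ?thesis ..
qed

lemma unipotent_upper_triangular_eq_one:
  assumes "prime p" "unipotent p (a, 0, c, d)" "unipotent p (a', b', c', d')" "b' \<noteq> 0"
    and "det_polar (a, 0, c, d) (a', b', c', d') mod int p = 2 mod int p"
  shows "(a, 0, c, d) = (1, 0, 0, 1)"
proof -
  have ad: "a = 1 \<and> d = 1"
    using unipotent_upper_triangular[OF assms(1,2)] .
  hence "int p dvd c * b'"
    using unipotent_polar_dvd[OF assms(2,3,5)] by simp
  moreover have "\<not> int p dvd b'"
    using eq_if_dvd_diff_in_range[of b' "int p" 0] unipotent_range(2)[OF assms(3)] assms(4)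
      prime_gt_0_nat[OF assms(1)] by auto
  ultimately have "int p dvd c - 0"
    using prime_dvd_mult_iff[OF prime_int_of_prime[OF assms(1)]] by simp
  moreover have "0 \<in> {0..<int p}"
    using prime_gt_0_nat[OF assms(1)] by simp
  ultimately have "c = 0"
    using eq_if_dvd_diff_in_range[OF unipotent_range(3)[OF assms(2)]] by blast
  with ad show ?thesis
    by simp
qed

lemma unipotent_eq_if_upper_right_eq:
  assumes "prime p" "unipotent p (a, b, c, d)" "unipotent p (a', b, c', d')" "b \<noteq> 0"
    and "det_polar (a, b, c, d) (a', b, c', d') mod int p = 2 mod int p"
  shows "(a, b, c, d) = (a', b, c', d')"
proof -
  have prime_p: "prime (int p)"
    using prime_int_of_prime[OF assms(1)] .
  note u = unipotentD[OF assms(2)] and v = unipotentD[OF assms(3)]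
  have "(a - a')^2 = ((a - 1)^2 + b*c) + ((a' - 1)^2 + b*c') - (2 * (a - 1) * (a' - 1) + b*c' + c*b)"
    by (simp add: power2_eq_square algebra_simps)
  hence "int p dvd (a - a')^2"
    using u(6) v(6) unipotent_polar_dvd[OF assms(2,3,5)] by (metis dvd_add dvd_diff)
  hence "int p dvd a - a'"
    using prime_dvd_power[OF prime_p] by blast
  hence a: "a = a'"
    by (rule eq_if_dvd_diff_in_range[OF u(1) v(1)])
  have "int p dvd (a + d - 2) - (a' + d' - 2)"
    using u(5) v(5) by (metis dvd_diff)
  hence d: "d = d'"
    using eq_if_dvd_diff_in_range[OF u(4) v(4)] a by simp
  have "int p dvd a*d - b*c - 1" "int p dvd a'*d' - b*c' - 1"
    using assms(2,3) by (simp_all add: unipotent_def SL2_def mod_eq_dvd_iff)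
  moreover have "b * (c' - c) = (a*d - b*c - 1) - (a'*d' - b*c' - 1)"
    using a d by (simp add: algebra_simps)
  ultimately have "int p dvd b * (c' - c)"
    by (metis dvd_diff)
  moreover have "\<not> int p dvd b"
    using eq_if_dvd_diff_in_range[of b "int p" 0] u(2) assms(4) prime_gt_0_nat[OF assms(1)] by auto
  ultimately have "int p dvd c' - c"
    using prime_dvd_mult_iff[OF prime_p] by blast
  hence "c' = c"
    by (rule eq_if_dvd_diff_in_range[OF v(3) u(3)])
  with a d show ?thesis
    by simp
qed

lemma card_unipotent_family_le:
  assumes "prime p" and unipotent: "\<forall>u\<in>T. unipotent p u"
    and polar: "\<forall>u\<in>T. \<forall>v\<in>T. det_polar u v mod int p = 2 mod int p"
  shows "card T \<le> p"
proof -
  have card_le_if_inj: "card T \<le> p" if "inj_on f T" "f ` T \<subseteq> {0..<int p}" for f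
    using card_inj_on_le[OF that] by simp
  have entries: "fst (snd u) \<in> {0..<int p} \<and> fst (snd (snd u)) \<in> {0..<int p}" if "u \<in> T" for u
  proof -
    obtain a b c d where u: "u = (a, b, c, d)"
      by (cases u)
    show ?thesis
      using that unipotent unipotent_range(2,3)[of p a b c d] unfolding u by auto
  qed
  show ?thesis
  proof (cases "\<exists>u\<in>T. fst (snd u) \<noteq> 0")
    case True
    then obtain a0 b0 c0 d0 where u0: "(a0, b0, c0, d0) \<in> T" and "b0 \<noteq> 0"
      by auto
    have identity: "u = (1, 0, 0, 1)" if u_T: "u \<in> T" and b_zero: "fst (snd u) = 0" for u
    proof -
      obtain a c d where u: "u = (a, 0, c, d)"
        using b_zero by (cases u) auto
      show ?thesis
        using unipotent_upper_triangular_eq_one[OF assms(1) _ _ \<open>b0 \<noteq> 0\<close>]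
          unipotent polar u_T u0 unfolding u by blast
    qed
    have "inj_on (\<lambda>u. fst (snd u)) T"
    proof (rule inj_onI)
      fix u v assume "u \<in> T" "v \<in> T" and same: "fst (snd u) = fst (snd v)"
      obtain a b c d a' b' c' d' where u: "u = (a, b, c, d)" and v: "v = (a', b', c', d')"
        by (cases u; cases v)
      have "b' = b"
        using same unfolding u v by simp
      show "u = v"
      proof (cases "b = 0")
        case True
        thus ?thesis
          using identity[OF \<open>u \<in> T\<close>] identity[OF \<open>v \<in> T\<close>] same unfolding u by simp
      next
        case False
        thus ?thesis
          using unipotent_eq_if_upper_right_eq[OF assms(1) _ _ False]
            unipotent polar \<open>u \<in> T\<close> \<open>v \<in> T\<close> unfolding u v \<open>b' = b\<close> by blast
      qed
    qed
    thus ?thesis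
      using card_le_if_inj entries by blast
  next
    case False
    have upper: "u = (1, 0, fst (snd (snd u)), 1)" if u_T: "u \<in> T" for u
    proof -
      obtain a c d where u: "u = (a, 0, c, d)"
        using u_T False by (cases u) auto
      show ?thesis
        using unipotent_upper_triangular[OF assms(1)] unipotent u_T unfolding u by fastforce
    qed
    have "inj_on (\<lambda>u. fst (snd (snd u))) T"
      by (rule inj_onI) (metis upper)
    thus ?thesis
      using card_le_if_inj entries by blast
  qed
qed

lemma card_independent_set_le:
  assumes "prime p" and "independent_set (SL2 p) (cayley_adj p) S"
  shows "card S \<le> p"
proof (cases "S = {}")
  case False
  then obtain g where g: "g \<in> S"
    by blast
  have p: "p > 0"
    using prime_gt_0_nat[OF assms(1)] .
  have S: "S \<subseteq> SL2 p" and non_adj: "\<And>u v. u \<in> S \<Longrightarrow> v \<in> S \<Longrightarrow> \<not> cayley_adj p u v"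
    using assms(2) unfolding independent_set_def by blast+
  have polar: "det_polar u v mod int p = 2 mod int p" if "u \<in> S" "v \<in> S" for u v
    using not_cayley_adj_iff[OF p] non_adj[OF that] that S by blast
  \<comment> \<open>translate \<open>S\<close> by \<open>g\<^sup>-\<^sup>1\<close>, which preserves \<open>B\<close> and makes every trace \<open>B(g, x) = 2\<close>\<close>
  define translate where "translate = mmul p (minv p g)"
  have inj: "inj_on translate S"
    by (rule inj_on_inverseI[of _ "mmul p g"]) (metis translate_def mmul_mmul_minv S g subsetD)
  have unipotent_translate: "unipotent p (translate x)" if "x \<in> S" for x
  proof -
    have "translate x \<in> SL2 p"
      unfolding translate_def using S g that by (intro mmul_in_SL2[OF p] minv_in_SL2[OF p]) auto
    moreover have "mtrace (translate x) mod int p = 2 mod int p"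
      unfolding translate_def mtrace_mmul_minv by (rule polar[OF g that])
    ultimately show ?thesis
      unfolding unipotent_def ..
  qed
  have "minv p g \<in> SL2 p"
    using minv_in_SL2[OF p] S g by blast
  hence "det2 (minv p g) mod int p = 1 mod int p"
    unfolding mem_SL2_iff by blast
  hence polar_translate: "det_polar (translate x) (translate y) mod int p = 2 mod int p"
    if "x \<in> S" "y \<in> S" for x y
    using polar[OF that] unfolding translate_def det_polar_mmul_left
    by (simp add: mult_mod_eq_if_mod_eq_1)
  have "card (translate ` S) \<le> p"
    using unipotent_translate polar_translate by (intro card_unipotent_family_le[OF assms(1)]) auto
  thus ?thesis
    using card_image[OF inj] by simp
qed simp

theorem mainTheorem4:
  fixes p :: nat
  assumes "prime p"
  shows "proper_coloring (SL2 p) (cayley_adj p) (\<lambda>F. (fst F, fst (snd F)))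
       \<and> card ((\<lambda>F. (fst F, fst (snd F))) ` SL2 p) = p^2 - 1
       \<and> p * (p - 1) \<le> chromatic_number (SL2 p) (cayley_adj p)
       \<and> chromatic_number (SL2 p) (cayley_adj p) \<le> p^2 - 1
       \<and> clique_number (SL2 p) (cayley_adj p) \<le> p^2 - 1"
proof -
  have proper: "proper_coloring (SL2 p) (cayley_adj p) first_row"
    using proper_coloring_first_row prime_gt_0_nat[OF assms] by blast
  have finite: "finite (first_row ` SL2 p)"
    using finite_SL2 by blast
  note card_colors = card_first_row_image_SL2[OF assms]
  have "(p - 1) * p * p \<le> chromatic_number (SL2 p) (cayley_adj p) * p"
    using card_SL2_ge[OF assms]
      card_le_chromatic_number_mult[OF finite proper card_independent_set_le[OF assms]]
    by linarith
  hence "p * (p - 1) \<le> chromatic_number (SL2 p) (cayley_adj p)"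
    using prime_gt_0_nat[OF assms] by (simp add: mult.commute)
  moreover have "chromatic_number (SL2 p) (cayley_adj p) \<le> p^2 - 1"
    using chromatic_number_le_card_image[OF finite proper] card_colors by simp
  moreover have "clique_number (SL2 p) (cayley_adj p) \<le> p^2 - 1"
    using clique_number_le_card_image[OF finite proper] card_colors by simp
  ultimately show ?thesis
    using proper card_colors unfolding first_row_def[abs_def] by blast
qed

end
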